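(* Let $k \geq 1$ be an integer. The consensus number of the atomic $k$-sliding read/write register type is at least $k$; that is, in an asynchronous system of $k$ crash-prone processes communicating through atomic read/write registers and $k$-sliding read/write registers, there is a wait-free algorithm implementing a consensus object.
   Context: System model: $n$ sequential asynchronous processes $p_1,\dots,p_n$ communicating through shared atomic objects; any number of processes may crash (halt prematurely, never recovering); implementations must be wait-free (every operation invoked by a non-crashed process terminates regardless of the behavior of the others). A consensus object provides a single operation $\mathrm{propose}(v)$, invoked at most once per process and returning a value, satisfying: Validity (a decided value was proposed by some process), Agreement (no two processes decide different values), Termination (every correct process that invokes $\mathrm{propose}()$ decides). The consensus number of an object type $T$ is the largest $n$ such that consensus can be wait-free implemented among $n$ processes using atomic read/write registers and objects of type $T$ ($+\infty$ if no such finite $n$ exists). An atomic $k$-sliding read/write register is a shared object whose state is a sequence of values (initially empty), with two atomic (linearizable) operations: $\mathrm{write}(v)$ appends $v$ to the end of the sequence, and $\mathrm{read}()$ returns the ordered sequence of the last $k$ values written before it in the linearization order, where if only $x<k$ values have been written the $k-x$ missing values are replaced by a default value $\bot$. *)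

theory Defs
  imports Main "HOL-Library.Extended_Nat"
begin

datatype objkind = RWReg | SlideReg

datatype 'v op = Rd nat | Wr nat 'v

datatype 'v act = Invoke "'v op" | Decide 'v

text \<open>The program of process i maps its proposal and the sequence
  of responses received so far (full-information local state) to its next action.
  Responses are lists of values with bottom (None): a register read returns a
  one-element list, a k-sliding read returns a k-element list, a write returns [].\<close>
record 'v alg =
  kind :: "nat \<Rightarrow> objkind"
  prog :: "nat \<Rightarrow> 'v \<Rightarrow> 'v option list list \<Rightarrow> 'v act"

record 'v conf =
  mem :: "nat \<Rightarrow> 'v list"
  hist :: "nat \<Rightarrow> 'v option list list"
  dec :: "nat \<Rightarrow> 'v option"

definition init_conf :: "'v conf" where
  "init_conf = \<lparr>mem = (\<lambda>_. []), hist = (\<lambda>_. []), dec = (\<lambda>_. None)\<rparr>"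

definition read_obj :: "nat \<Rightarrow> objkind \<Rightarrow> 'v list \<Rightarrow> 'v option list" where
  "read_obj k ok h = (case ok of
      RWReg \<Rightarrow> [if h = [] then None else Some (last h)]
    | SlideReg \<Rightarrow> replicate (k - length h) None @ map Some (drop (length h - k) h))"

definition step :: "nat \<Rightarrow> 'v alg \<Rightarrow> (nat \<Rightarrow> 'v) \<Rightarrow> 'v conf \<Rightarrow> nat \<Rightarrow> 'v conf" where
  "step k A inp c i =
    (if dec c i \<noteq> None then c else
     (case prog A i (inp i) (hist c i) of
        Decide v \<Rightarrow> c\<lparr>dec := (dec c)(i := Some v)\<rparr>
      | Invoke (Rd x) \<Rightarrow>
          c\<lparr>hist := (hist c)(i := hist c i @ [read_obj k (kind A x) (mem c x)])\<rparr>
      | Invoke (Wr x v) \<Rightarrow>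
          c\<lparr>mem := (mem c)(x := mem c x @ [v]), hist := (hist c)(i := hist c i @ [[]])\<rparr>))"

definition run :: "nat \<Rightarrow> 'v alg \<Rightarrow> (nat \<Rightarrow> 'v) \<Rightarrow> nat list \<Rightarrow> 'v conf" where
  "run k A inp \<sigma> = foldl (step k A inp) init_conf \<sigma>"

text \<open>A wait-free implementation of consensus among processes 0..n-1 using registers
  and k-sliding registers.  inp i is the value proposed by process i; a process
  invokes propose at its first step.  Crashes: a process that takes only finitely many
  steps of an infinite schedule (or none) has crashed.\<close>
definition wf_consensus :: "nat \<Rightarrow> nat \<Rightarrow> 'v alg \<Rightarrow> bool" where
  "wf_consensus n k A \<longleftrightarrow>
     (\<forall>inp \<sigma> i j v w. set \<sigma> \<subseteq> {..<n} \<longrightarrow>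
         dec (run k A inp \<sigma>) i = Some v \<longrightarrow> dec (run k A inp \<sigma>) j = Some w \<longrightarrow> v = w) \<and>
     (\<forall>inp \<sigma> i v. set \<sigma> \<subseteq> {..<n} \<longrightarrow>
         dec (run k A inp \<sigma>) i = Some v \<longrightarrow> (\<exists>j\<in>set \<sigma>. v = inp j)) \<and>
     (\<forall>inp (s :: nat \<Rightarrow> nat) i. (\<forall>t. s t < n) \<longrightarrow> (\<exists>\<^sub>\<infinity>t. s t = i) \<longrightarrow>
         (\<exists>t. dec (run k A inp (map s [0..<t])) i \<noteq> None))"

definition consensus_number_sliding :: "'v itself \<Rightarrow> nat \<Rightarrow> enat" where
  "consensus_number_sliding (_ :: 'v itself) k =
     Sup {enat n | n. \<exists>A :: 'v alg. wf_consensus n k A}"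

end

(* Each process writes its proposal to a single k-sliding register, reads the register back, and
   decides the oldest value in the window it read. Among k processes at most k writes ever occur,
   so every read still sees the very first write, and all processes decide the proposal of the
   process that was scheduled first. *)

theory Submission
  imports Defs "HOL-Library.Infinite_Set"
begin

primrec oldest_value :: "'v option list \<Rightarrow> 'v option" where
  "oldest_value [] = None"
| "oldest_value (r # rs) = (case r of None \<Rightarrow> oldest_value rs | Some v \<Rightarrow> Some v)"

lemma oldest_value_replicate_None_append [simp]:
  "oldest_value (replicate n None @ rs) = oldest_value rs"
  by (induction n) auto

lemma oldest_value_map_Some [simp]:
  "xs \<noteq> [] \<Longrightarrow> oldest_value (map Some xs) = Some (hd xs)"
  by (cases xs) auto

lemma read_obj_SlideReg_short:
  "length xs \<le> k \<Longrightarrow> read_obj k SlideReg xs = replicate (k - length xs) None @ map Some xs"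
  by (simp add: read_obj_def)

lemma oldest_value_read_SlideReg:
  "xs \<noteq> [] \<Longrightarrow> length xs \<le> k \<Longrightarrow> oldest_value (read_obj k SlideReg xs) = Some (hd xs)"
  by (simp add: read_obj_SlideReg_short)

definition sliding_consensus :: "'v alg" where
  "sliding_consensus =
    \<lparr>kind = (\<lambda>_. SlideReg),
     prog = (\<lambda>i v h. case h of
                [] \<Rightarrow> Invoke (Wr 0 v)
              | [_] \<Rightarrow> Invoke (Rd 0)
              | _ # r # _ \<Rightarrow> Decide (case oldest_value r of Some w \<Rightarrow> w | None \<Rightarrow> v))\<rparr>"

text \<open>The configuration after a schedule \<sigma> depends only on how often each process occurs in \<sigma>:
  its first step writes, its second reads, its third decides the proposal of \<open>hd \<sigma>\<close>.\<close>
definition sliding_consensus_inv :: "(nat \<Rightarrow> 'v) \<Rightarrow> nat list \<Rightarrow> 'v conf \<Rightarrow> bool" where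
  "sliding_consensus_inv inp \<sigma> c \<longleftrightarrow>
     length (mem c 0) = card (set \<sigma>) \<and>
     (\<sigma> \<noteq> [] \<longrightarrow> hd (mem c 0) = inp (hd \<sigma>)) \<and>
     (\<forall>i. length (hist c i) = min 2 (count_list \<sigma> i)) \<and>
     (\<forall>i. length (hist c i) = 2 \<longrightarrow> oldest_value (hist c i ! 1) = Some (inp (hd \<sigma>))) \<and>
     (\<forall>i. dec c i = (if 3 \<le> count_list \<sigma> i then Some (inp (hd \<sigma>)) else None))"

lemma sliding_consensus_inv_init: "sliding_consensus_inv inp [] init_conf"
  by (simp add: sliding_consensus_inv_def init_conf_def)

lemma sliding_consensus_inv_step:
  assumes inv: "sliding_consensus_inv inp \<sigma> c" and \<sigma>: "set (\<sigma> @ [i]) \<subseteq> {..<k}"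
  shows "sliding_consensus_inv inp (\<sigma> @ [i]) (step k sliding_consensus inp c i)"
proof -
  have hist_len: "length (hist c j) = min 2 (count_list \<sigma> j)" for j
    using inv by (simp add: sliding_consensus_inv_def)
  have hist_read: "length (hist c j) = 2 \<Longrightarrow> oldest_value (hist c j ! 1) = Some (inp (hd \<sigma>))" for j
    using inv by (simp add: sliding_consensus_inv_def)
  have dec_c: "dec c j = (if 3 \<le> count_list \<sigma> j then Some (inp (hd \<sigma>)) else None)" for j
    using inv by (simp add: sliding_consensus_inv_def)
  have scheduled_before: "count_list \<sigma> i \<noteq> 0 \<Longrightarrow> i \<in> set \<sigma>"
    by (simp add: count_list_0_iff)
  have mem_len: "length (mem c 0) \<le> k"
    using inv \<sigma> card_mono[of "{..<k}" "set \<sigma>"] by (simp add: sliding_consensus_inv_def)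
  consider "count_list \<sigma> i = 0" | "count_list \<sigma> i = 1" | "count_list \<sigma> i = 2"
    | "3 \<le> count_list \<sigma> i" by linarith
  then show ?thesis
  proof cases
    case 1
    then have "hist c i = []" "dec c i = None"
      using hist_len[of i] dec_c[of i] by simp_all
    then show ?thesis
      using inv 1
      by (auto simp: sliding_consensus_inv_def step_def sliding_consensus_def hd_append count_list_0_iff)
  next
    case 2
    obtain r where "hist c i = [r]" "dec c i = None"
      using 2 hist_len[of i] dec_c[of i] by (auto simp: length_Suc_conv)
    have "i \<in> set \<sigma>"
      using 2 scheduled_before by simp
    then have "mem c 0 \<noteq> []" "hd (mem c 0) = inp (hd \<sigma>)"
      using inv by (auto simp: sliding_consensus_inv_def)
    then have "oldest_value (read_obj k SlideReg (mem c 0)) = Some (inp (hd \<sigma>))"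
      using mem_len by (simp add: oldest_value_read_SlideReg)
    then show ?thesis
      using inv 2 \<open>i \<in> set \<sigma>\<close> \<open>hist c i = [r]\<close> \<open>dec c i = None\<close>
      by (auto simp: sliding_consensus_inv_def step_def sliding_consensus_def hd_append insert_absorb)
  next
    case 3
    obtain r r' where "hist c i = [r, r']" "dec c i = None"
      using 3 hist_len[of i] dec_c[of i] by (auto simp: length_Suc_conv numeral_2_eq_2)
    moreover have "i \<in> set \<sigma>"
      using 3 scheduled_before by simp
    moreover have "oldest_value r' = Some (inp (hd \<sigma>))"
      using hist_read[of i] \<open>hist c i = [r, r']\<close> by simp
    ultimately show ?thesis
      using inv 3
      by (auto simp: sliding_consensus_inv_def step_def sliding_consensus_def hd_append insert_absorb)
  next
    case 4
    then have "step k sliding_consensus inp c i = c"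
      using dec_c[of i] by (simp add: step_def)
    moreover have "i \<in> set \<sigma>"
      using 4 scheduled_before by simp
    ultimately show ?thesis
      using inv 4 by (auto simp: sliding_consensus_inv_def hd_append insert_absorb)
  qed
qed

lemma sliding_consensus_inv_run:
  "set \<sigma> \<subseteq> {..<k} \<Longrightarrow> sliding_consensus_inv inp \<sigma> (run k sliding_consensus inp \<sigma>)"
proof (induction \<sigma> rule: rev_induct)
  case Nil
  show ?case by (simp add: run_def sliding_consensus_inv_init)
next
  case (snoc i \<sigma>)
  then show ?case by (simp add: run_def sliding_consensus_inv_step)
qed

lemma dec_run_sliding_consensus:
  "set \<sigma> \<subseteq> {..<k} \<Longrightarrow> dec (run k sliding_consensus inp \<sigma>) i =
     (if 3 \<le> count_list \<sigma> i then Some (inp (hd \<sigma>)) else None)"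
  using sliding_consensus_inv_run[of \<sigma> k inp] unfolding sliding_consensus_inv_def by blast

lemma count_list_upt_frequently_unbounded:
  assumes "\<exists>\<^sub>\<infinity>t. s t = x"
  shows "\<exists>T. m \<le> count_list (map s [0..<T]) x"
proof (induction m)
  case 0
  show ?case by simp
next
  case (Suc m)
  then obtain T where T: "m \<le> count_list (map s [0..<T]) x" by blast
  obtain t where "T \<le> t" "s t = x"
    using assms by (auto simp: INFM_nat_le)
  then have "[0..<Suc t] = [0..<T] @ [T..<t] @ [t]"
    by (metis le0 le_Suc_ex upt_Suc_append upt_add_eq_append append_assoc)
  then have "Suc m \<le> count_list (map s [0..<Suc t]) x"
    using T \<open>s t = x\<close> by simp
  then show ?case by blast
qed

lemma wf_consensus_sliding_consensus: "wf_consensus k k sliding_consensus"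
  unfolding wf_consensus_def
proof (intro conjI allI impI)
  fix inp :: "nat \<Rightarrow> 'v" and \<sigma> i j v w
  assume "set \<sigma> \<subseteq> {..<k}" "dec (run k sliding_consensus inp \<sigma>) i = Some v"
    "dec (run k sliding_consensus inp \<sigma>) j = Some w"
  then show "v = w"
    by (simp add: dec_run_sliding_consensus split: if_splits)
next
  fix inp :: "nat \<Rightarrow> 'v" and \<sigma> i v
  assume "set \<sigma> \<subseteq> {..<k}" "dec (run k sliding_consensus inp \<sigma>) i = Some v"
  then have "v = inp (hd \<sigma>)" "\<sigma> \<noteq> []"
    by (auto simp: dec_run_sliding_consensus split: if_splits)
  then show "\<exists>j\<in>set \<sigma>. v = inp j" by auto
next
  fix inp :: "nat \<Rightarrow> 'v" and s :: "nat \<Rightarrow> nat" and i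
  assume "\<forall>t. s t < k" "\<exists>\<^sub>\<infinity>t. s t = i"
  then obtain T where "set (map s [0..<T]) \<subseteq> {..<k}" "3 \<le> count_list (map s [0..<T]) i"
    using count_list_upt_frequently_unbounded[of s i 3] by auto
  then have "dec (run k sliding_consensus inp (map s [0..<T])) i \<noteq> None"
    by (simp add: dec_run_sliding_consensus)
  then show "\<exists>t. dec (run k sliding_consensus inp (map s [0..<t])) i \<noteq> None" ..
qed

theorem theorem1:
  fixes k :: nat
  assumes "k \<ge> 1"
  shows "enat k \<le> consensus_number_sliding TYPE('v) k"
  unfolding consensus_number_sliding_def
  using wf_consensus_sliding_consensus by (blast intro: Sup_upper)

end
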